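(* For a prime $p$ let $\mathrm{Aff}_1(p) = \{x \mapsto ax + b : a \in \mathbb{F}_p^\times, b \in \mathbb{F}_p\} \cong C_p \rtimes C_{p-1}$ act naturally on $\mathbb{F}_p$. Then the sequence of actions $(\mathrm{Aff}_1(p) \circlearrowright \mathbb{F}_p)_{p \geq 3}$ ($p$ ranging over odd primes) is not expanding.
   Context: For a group $G$ acting on a finite set $\Omega$ and a symmetric subset $S \subseteq G$, the Schreier graph $\mathrm{Sch}(G \circlearrowright \Omega, S)$ has vertex set $\Omega$ and an edge $(\omega, \omega^s)$ for each $\omega \in \Omega$, $s \in S$. For a finite graph $\Gamma$, $h_{ver}(\Gamma) = \min_{X \neq \emptyset, |X| \leq |V(\Gamma)|/2} |\partial_{ver}X|/|X|$, where $\partial_{ver}X$ is the set of vertices at distance exactly $1$ from $X$. A sequence of regular bounded-degree graphs with vertex counts tending to infinity is expander if $h_{ver} \geq \varepsilon$ for a fixed $\varepsilon > 0$. A sequence of transitive actions $(G_n \circlearrowright \Omega_n)$ is expanding if there are symmetric subsets $S_n \subseteq G_n$ of bounded cardinality with $(\mathrm{Sch}(G_n \circlearrowright \Omega_n, S_n))$ expander graphs. *)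

theory Defs
  imports Complex_Main "HOL-Computational_Algebra.Primes"
begin

definition vertex_boundary :: "'v set \<Rightarrow> ('v \<Rightarrow> 'v \<Rightarrow> bool) \<Rightarrow> 'v set \<Rightarrow> 'v set" where
  "vertex_boundary V adj X = {v \<in> V - X. \<exists>x\<in>X. adj x v}"

definition h_ver :: "'v set \<Rightarrow> ('v \<Rightarrow> 'v \<Rightarrow> bool) \<Rightarrow> real" where
  "h_ver V adj = Min {real (card (vertex_boundary V adj X)) / real (card X) | X.
       X \<subseteq> V \<and> X \<noteq> {} \<and> 2 * card X \<le> card V}"

definition schreier_adj :: "('g \<Rightarrow> 'w \<Rightarrow> 'w) \<Rightarrow> 'g set \<Rightarrow> 'w \<Rightarrow> 'w \<Rightarrow> bool" where
  "schreier_adj act S w w' \<longleftrightarrow> (\<exists>s\<in>S. w' = act s w)"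

definition aff_grp :: "nat \<Rightarrow> (nat \<times> nat) set" where
  "aff_grp p = {(a, b). 1 \<le> a \<and> a < p \<and> b < p}"

definition aff_act :: "nat \<Rightarrow> nat \<times> nat \<Rightarrow> nat \<Rightarrow> nat" where
  "aff_act p g x = (fst g * x + snd g) mod p"

definition aff_comp :: "nat \<Rightarrow> nat \<times> nat \<Rightarrow> nat \<times> nat \<Rightarrow> nat \<times> nat" where
  "aff_comp p g h = ((fst g * fst h) mod p, (fst g * snd h + snd g) mod p)"

definition aff_symmetric :: "nat \<Rightarrow> (nat \<times> nat) set \<Rightarrow> bool" where
  "aff_symmetric p S \<longleftrightarrow> (\<forall>s\<in>S. \<exists>t\<in>S. aff_comp p t s = (1, 0))"

definition aff_expanding :: bool where
  "aff_expanding \<longleftrightarrow>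
     (\<exists>k::nat. \<exists>\<epsilon>::real. \<epsilon> > 0 \<and>
        (\<exists>S :: nat \<Rightarrow> (nat \<times> nat) set. \<forall>p. prime p \<and> odd p \<longrightarrow>
            S p \<subseteq> aff_grp p \<and> aff_symmetric p (S p) \<and> card (S p) \<le> k \<and>
            h_ver {..<p} (schreier_adj (aff_act p) (S p)) \<ge> \<epsilon>))"

end

theory Submission
  imports Defs "HOL-Library.FuncSet" "HOL-Number_Theory.Cong"
begin

text \<open>Any k affine maps of F_p are the images of the generators of the amenable group
  Z^k \<ltimes> Z[Z^k]^k of formal affine maps, and this group has Folner sets (boxes of side N
  with boundary ratio 2/N) whose size does not depend on p. Pushing the counting measure of
  such a box E forward to F_p along u \<mapsto> u^-1(x0) gives a function whose superlevel sets have,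
  on average, vertex boundary ratio at most 2k/N; one of them has at most |E| < p/2 elements.
  Hence h_ver \<le> 2k/N for all large p, and N is arbitrary.\<close>

lemma h_ver_le:
  assumes "finite V" "X \<subseteq> V" "X \<noteq> {}" "2 * card X \<le> card V"
  shows "h_ver V adj \<le> real (card (vertex_boundary V adj X)) / real (card X)"
proof -
  have "finite {X. X \<subseteq> V \<and> X \<noteq> {} \<and> 2 * card X \<le> card V}"
    by (rule finite_subset[of _ "Pow V"]) (use assms(1) in auto)
  then show ?thesis
    unfolding h_ver_def by (rule Min_le[OF finite_image_set]) (use assms in blast)
qed

lemma card_schreier_boundary_le:
  assumes "finite S" "finite X"
  shows "card (vertex_boundary V (schreier_adj act S) X) \<le> (\<Sum>s\<in>S. card {x \<in> X. act s x \<notin> X})"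
proof -
  have "vertex_boundary V (schreier_adj act S) X \<subseteq> (\<Union>s\<in>S. act s ` {x \<in> X. act s x \<notin> X})"
    unfolding vertex_boundary_def schreier_adj_def by auto
  then have "card (vertex_boundary V (schreier_adj act S) X) \<le> card (\<Union>s\<in>S. act s ` {x \<in> X. act s x \<notin> X})"
    by (rule card_mono[rotated]) (use assms in auto)
  also have "\<dots> \<le> (\<Sum>s\<in>S. card (act s ` {x \<in> X. act s x \<notin> X}))"
    by (rule card_UN_le[OF assms(1)])
  also have "\<dots> \<le> (\<Sum>s\<in>S. card {x \<in> X. act s x \<notin> X})"
    by (intro sum_mono card_image_le) (use assms in auto)
  finally show ?thesis .
qed

lemma sum_card_filter_swap:
  assumes "finite A" "finite B"
  shows "(\<Sum>a\<in>A. card {b \<in> B. P a b}) = (\<Sum>b\<in>B. card {a \<in> A. P a b})"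
proof -
  have card_filter: "card {y \<in> Y. Q y} = (\<Sum>y\<in>Y. if Q y then 1 else 0)" if "finite Y" for Y :: "'z set" and Q
    using sum.inter_filter[OF that, of "\<lambda>_. 1::nat" Q] by simp
  show ?thesis
    using assms by (simp add: card_filter sum.swap[of _ A B])
qed

lemma sum_card_superlevel_sets:
  assumes "finite V" "\<And>x. x \<in> V \<Longrightarrow> \<phi> x \<le> K"
  shows "(\<Sum>t\<in>{1..K}. card {x \<in> V. t \<le> \<phi> x}) = (\<Sum>x\<in>V. \<phi> x)"
proof -
  have "(\<Sum>t\<in>{1..K}. card {x \<in> V. t \<le> \<phi> x}) = (\<Sum>x\<in>V. card {t \<in> {1..K}. t \<le> \<phi> x})"
    using assms(1) by (rule sum_card_filter_swap[OF finite_atLeastAtMost])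
  also have "\<dots> = (\<Sum>x\<in>V. card {1..\<phi> x})"
    by (intro sum.cong arg_cong[where f = card]) (use assms(2) in fastforce)+
  finally show ?thesis by simp
qed

lemma sum_card_superlevel_exits:
  assumes "finite V" "f ` V \<subseteq> V"
  shows "(\<Sum>t\<in>{1..K}. card {x \<in> {x \<in> V. t \<le> \<phi> x}. f x \<notin> {x \<in> V. t \<le> \<phi> x}})
           \<le> (\<Sum>x\<in>V. \<phi> x - \<phi> (f x))"
proof -
  have "(\<Sum>t\<in>{1..K}. card {x \<in> {x \<in> V. t \<le> \<phi> x}. f x \<notin> {x \<in> V. t \<le> \<phi> x}})
      = (\<Sum>t\<in>{1..K}. card {x \<in> V. t \<le> \<phi> x \<and> \<phi> (f x) < t})"
    using assms(2) by (intro sum.cong arg_cong[where f = card]) auto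
  also have "\<dots> = (\<Sum>x\<in>V. card {t \<in> {1..K}. t \<le> \<phi> x \<and> \<phi> (f x) < t})"
    using assms(1) by (rule sum_card_filter_swap[OF finite_atLeastAtMost])
  also have "\<dots> \<le> (\<Sum>x\<in>V. card {\<phi> (f x)<..\<phi> x})"
    by (intro sum_mono card_mono) auto
  finally show ?thesis by simp
qed

lemma exists_le_of_sum_le:
  fixes a b :: "'a \<Rightarrow> nat"
  assumes "finite T" "T \<noteq> {}" "(\<Sum>t\<in>T. b t) \<le> (\<Sum>t\<in>T. a t)"
  shows "\<exists>t\<in>T. b t \<le> a t"
  using sum_strict_mono[OF assms(1,2), of a b] assms(3) by (meson not_le)

text \<open>Model case: E is a finite subset of a group acting on V through a lift of the action,
  F u is the action of u and T s is right multiplication by a lift of s.\<close>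
locale equivariant_cover =
  fixes V :: "'v set" and act :: "'g \<Rightarrow> 'v \<Rightarrow> 'v" and S :: "'g set"
    and E :: "'u set" and T :: "'g \<Rightarrow> 'u \<Rightarrow> 'u" and F :: "'u \<Rightarrow> 'v \<Rightarrow> 'v"
  assumes finite_V: "finite V" and finite_S: "finite S" and finite_E: "finite E"
    and act_closed: "s \<in> S \<Longrightarrow> x \<in> V \<Longrightarrow> act s x \<in> V"
    and bij_F: "u \<in> E \<Longrightarrow> bij_betw (F u) V V"
    and inj_T: "s \<in> S \<Longrightarrow> inj_on (T s) E"
    and F_T: "s \<in> S \<Longrightarrow> u \<in> E \<Longrightarrow> x \<in> V \<Longrightarrow> F (T s u) x = F u (act s x)"
begin

definition weight :: "'v \<Rightarrow> 'v \<Rightarrow> nat" where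
  "weight x0 x = card {u \<in> E. F u x = x0}"

lemma weight_le_card: "weight x0 x \<le> card E"
  unfolding weight_def using finite_E by (rule card_mono) auto

lemma sum_fibre_card:
  assumes "x0 \<in> V" "D \<subseteq> E"
  shows "(\<Sum>x\<in>V. card {u \<in> D. F u x = x0}) = card D"
proof -
  have "card {x \<in> V. F u x = x0} = 1" if "u \<in> D" for u
  proof -
    have bij: "bij_betw (F u) V V" using bij_F that assms(2) by blast
    then obtain x where "x \<in> V" "F u x = x0" using assms(1) by (metis bij_betw_iff_bijections)
    with bij have "{x \<in> V. F u x = x0} = {x}" by (auto simp: bij_betw_def inj_on_def)
    then show ?thesis by simp
  qed
  moreover have "finite D" using finite_E assms(2) by (rule finite_subset[rotated])
  ultimately show ?thesis
    by (simp add: sum_card_filter_swap[OF finite_V])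
qed

lemma sum_weight: "x0 \<in> V \<Longrightarrow> (\<Sum>x\<in>V. weight x0 x) = card E"
  unfolding weight_def by (rule sum_fibre_card) auto

lemma weight_le_weight_act:
  assumes "s \<in> S" "x \<in> V"
  shows "weight x0 x \<le> card {u \<in> E - T s ` E. F u x = x0} + weight x0 (act s x)"
proof -
  have "{u \<in> E. F u x = x0} \<subseteq> {u \<in> E - T s ` E. F u x = x0} \<union> T s ` {w \<in> E. F w (act s x) = x0}"
    using F_T[OF assms(1) _ assms(2)] by auto
  then have "weight x0 x \<le> card ({u \<in> E - T s ` E. F u x = x0} \<union> T s ` {w \<in> E. F w (act s x) = x0})"
    unfolding weight_def by (rule card_mono[rotated]) (simp add: finite_E)
  also have "\<dots> \<le> card {u \<in> E - T s ` E. F u x = x0} + card (T s ` {w \<in> E. F w (act s x) = x0})"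
    by (rule card_Un_le)
  also have "card (T s ` {w \<in> E. F w (act s x) = x0}) \<le> weight x0 (act s x)"
    unfolding weight_def by (rule card_image_le) (simp add: finite_E)
  finally show ?thesis by simp
qed

lemma sum_weight_drop_le:
  assumes "s \<in> S" "x0 \<in> V"
  shows "(\<Sum>x\<in>V. weight x0 x - weight x0 (act s x)) \<le> card (T s ` E - E)"
proof -
  have "(\<Sum>x\<in>V. weight x0 x - weight x0 (act s x)) \<le> (\<Sum>x\<in>V. card {u \<in> E - T s ` E. F u x = x0})"
  proof (rule sum_mono)
    fix x assume "x \<in> V"
    show "weight x0 x - weight x0 (act s x) \<le> card {u \<in> E - T s ` E. F u x = x0}"
      using weight_le_weight_act[OF assms(1) \<open>x \<in> V\<close>, of x0] by linarith
  qed
  also have "\<dots> = card (E - T s ` E)"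
    using assms(2) by (rule sum_fibre_card) auto
  also have "\<dots> = card (T s ` E - E)"
    using card_image[OF inj_T[OF assms(1)]] finite_E
    by (simp add: card_Diff_subset_Int Int_commute)
  finally show ?thesis .
qed

definition superlevel :: "'v \<Rightarrow> nat \<Rightarrow> 'v set" where
  "superlevel x0 t = {x \<in> V. t \<le> weight x0 x}"

lemma sum_card_superlevel: "x0 \<in> V \<Longrightarrow> (\<Sum>t\<in>{1..card E}. card (superlevel x0 t)) = card E"
  unfolding superlevel_def using sum_card_superlevel_sets[OF finite_V weight_le_card] sum_weight
  by simp

lemma sum_boundary_superlevel_le:
  assumes "x0 \<in> V"
  shows "(\<Sum>t\<in>{1..card E}. card (vertex_boundary V (schreier_adj act S) (superlevel x0 t)))
           \<le> (\<Sum>s\<in>S. card (T s ` E - E))"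
proof -
  have "(\<Sum>t\<in>{1..card E}. card (vertex_boundary V (schreier_adj act S) (superlevel x0 t)))
      \<le> (\<Sum>t\<in>{1..card E}. \<Sum>s\<in>S. card {x \<in> superlevel x0 t. act s x \<notin> superlevel x0 t})"
    by (intro sum_mono card_schreier_boundary_le finite_S) (simp add: superlevel_def finite_V)
  also have "\<dots> = (\<Sum>s\<in>S. \<Sum>t\<in>{1..card E}. card {x \<in> superlevel x0 t. act s x \<notin> superlevel x0 t})"
    by (rule sum.swap)
  also have "\<dots> \<le> (\<Sum>s\<in>S. card (T s ` E - E))"
    unfolding superlevel_def
    by (intro sum_mono order_trans[OF sum_card_superlevel_exits sum_weight_drop_le])
      (use finite_V act_closed assms in auto)
  finally show ?thesis .
qed

text \<open>Layer-cake averaging: the superlevel sets of the weight decompose the counting measure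
  on E, and their boundaries are paid for by the boundary of E.\<close>
theorem exists_small_boundary:
  assumes "x0 \<in> V" "E \<noteq> {}"
    and Folner: "\<And>s. s \<in> S \<Longrightarrow> M * card (T s ` E - E) \<le> c * card E"
  shows "\<exists>X \<subseteq> V. X \<noteq> {} \<and> card X \<le> card E \<and>
           M * card (vertex_boundary V (schreier_adj act S) X) \<le> c * card S * card X"
proof -
  let ?X = "superlevel x0" and ?boundary = "vertex_boundary V (schreier_adj act S)"
  let ?L = "{t \<in> {1..card E}. ?X t \<noteq> {}}"
  have "(\<Sum>t\<in>?L. card (?X t)) = (\<Sum>t\<in>{1..card E}. card (?X t))"
    by (rule sum.mono_neutral_left) auto
  with sum_card_superlevel[OF assms(1)] have sum_L: "(\<Sum>t\<in>?L. card (?X t)) = card E"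
    by simp
  with assms(2) finite_E have "?L \<noteq> {}" by auto
  have "(\<Sum>t\<in>?L. M * card (?boundary (?X t))) \<le> M * (\<Sum>t\<in>{1..card E}. card (?boundary (?X t)))"
    unfolding sum_distrib_left by (rule sum_mono2) auto
  also have "\<dots> \<le> M * (\<Sum>s\<in>S. card (T s ` E - E))"
    by (rule mult_le_mono2 sum_boundary_superlevel_le[OF assms(1)])+
  also have "\<dots> \<le> (\<Sum>s\<in>S. c * card E)"
    unfolding sum_distrib_left by (rule sum_mono[OF Folner])
  also have "\<dots> = (\<Sum>t\<in>?L. c * card S * card (?X t))"
    using sum_L by (simp add: sum_distrib_left[symmetric])
  finally have "\<exists>t\<in>?L. M * card (?boundary (?X t)) \<le> c * card S * card (?X t)"
    by (rule exists_le_of_sum_le[rotated 2]) (use \<open>?L \<noteq> {}\<close> in simp_all)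
  moreover have "card (?X t) \<le> card E" if "t \<in> {1..card E}" for t
    using member_le_sum[OF that, of "\<lambda>t. card (?X t)"] sum_card_superlevel[OF assms(1)] by simp
  ultimately obtain t where "?X t \<noteq> {}" "card (?X t) \<le> card E"
    "M * card (?boundary (?X t)) \<le> c * card S * card (?X t)"
    by auto
  moreover have "?X t \<subseteq> V" by (simp add: superlevel_def)
  ultimately show ?thesis by blast
qed

end

lemma bij_betw_affine_mod:
  fixes p a b :: nat
  assumes "prime p" "\<not> p dvd a"
  shows "bij_betw (\<lambda>x. (a * x + b) mod p) {..<p} {..<p}"
proof -
  have "coprime a p" using prime_imp_coprime[OF assms] by (simp add: coprime_commute)
  then have "inj_on (\<lambda>x. (a * x + b) mod p) {..<p}"
    by (intro inj_onI) (auto simp: cong_def[symmetric] cong_add_rcancel_nat cong_mult_lcancel_nat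
        dest: cong_less_modulus_unique_nat)
  moreover have "(\<lambda>x. (a * x + b) mod p) ` {..<p} \<subseteq> {..<p}"
    using prime_gt_0_nat[OF assms(1)] by auto
  ultimately show ?thesis
    by (simp add: bij_betw_def endo_inj_surj)
qed

lemma card_PiE_update:
  assumes "finite A" "a \<in> A"
  shows "card (PiE A (B(a := C))) * card (B a) = card (PiE A B) * card C"
proof -
  have "(\<Prod>i\<in>A - {a}. card ((B(a := C)) i)) = (\<Prod>i\<in>A - {a}. card (B i))"
    by (rule prod.cong) auto
  then have "card (PiE A (B(a := C))) = card C * (\<Prod>i\<in>A - {a}. card (B i))"
    by (simp add: card_PiE[OF assms(1)] prod.remove[OF assms])
  moreover have "card (PiE A B) = card (B a) * (\<Prod>i\<in>A - {a}. card (B i))"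
    by (simp add: card_PiE[OF assms(1)] prod.remove[OF assms])
  ultimately show ?thesis by simp
qed

lemma card_box_slice:
  fixes N :: nat
  assumes "finite A" "a \<in> A" "b < N"
  shows "N * card {f \<in> PiE A (\<lambda>_. {..<N}). f a = b} = card (PiE A (\<lambda>_. {..<N}))"
proof -
  have "{f \<in> PiE A (\<lambda>_. {..<N}). f a = b} = PiE A ((\<lambda>_. {..<N})(a := {b}))"
    using assms(2,3) by (auto simp: PiE_iff extensional_def split: if_splits)
  then show ?thesis
    using card_PiE_update[OF assms(1,2), of "\<lambda>_. {..<N}" "{b}"] by (simp add: mult.commute)
qed

definition bump :: "'a \<Rightarrow> ('a \<Rightarrow> nat) \<Rightarrow> 'a \<Rightarrow> nat" where
  "bump a f = f(a := Suc (f a))"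

lemma inj_bump: "inj (bump a)"
  by (rule injI) (metis bump_def fun_upd_idem_iff fun_upd_upd nat.inject fun_upd_same)

lemma bump_in_box:
  assumes "f \<in> PiE A (\<lambda>_. {..<N})" "a \<in> A" "f a \<noteq> N - 1"
  shows "bump a f \<in> PiE A (\<lambda>_. {..<N})"
  using assms by (fastforce simp: bump_def PiE_iff extensional_def)

lemma sum_bump:
  fixes w :: "'a \<Rightarrow> nat"
  assumes "finite I" "i \<in> I"
  shows "(\<Sum>j\<in>I. bump i c j * w j) = (\<Sum>j\<in>I. c j * w j) + w i"
proof -
  have "(\<Sum>j\<in>I - {i}. bump i c j * w j) = (\<Sum>j\<in>I - {i}. c j * w j)"
    by (rule sum.cong) (auto simp: bump_def)
  then show ?thesis
    by (simp add: sum.remove[OF assms] bump_def)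
qed

lemma prod_power_bump:
  fixes a :: "'a \<Rightarrow> 'b::comm_monoid_mult"
  assumes "finite I" "i \<in> I"
  shows "(\<Prod>j\<in>I. a j ^ bump i e j) = (\<Prod>j\<in>I. a j ^ e j) * a i"
proof -
  have "(\<Prod>j\<in>I - {i}. a j ^ bump i e j) = (\<Prod>j\<in>I - {i}. a j ^ e j)"
    by (rule prod.cong) (auto simp: bump_def)
  then show ?thesis
    by (simp add: prod.remove[OF assms] bump_def ac_simps)
qed

type_synonym aff = "nat \<times> nat"
type_synonym formal_aff = "(aff \<Rightarrow> nat) \<times> (aff \<times> (aff \<Rightarrow> nat) \<Rightarrow> nat)"

text \<open>A formal affine map (e, c) stands for x \<mapsto> m e x + \<Sum>(t,e'). c (t,e') m e' b_t,
  where m e = \<Prod>t. a_t ^ e_t for the generators t = (a_t, b_t) of S. Precomposition with a generator s increments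
  one exponent and one coefficient, so the box of formal maps whose entries are all below N is
  moved off itself only in a fraction 2/N, whatever p is.\<close>

definition monomials :: "aff set \<Rightarrow> nat \<Rightarrow> (aff \<Rightarrow> nat) set" where
  "monomials S N = PiE S (\<lambda>_. {..<N})"

definition coeff_box :: "aff set \<Rightarrow> nat \<Rightarrow> (aff \<times> (aff \<Rightarrow> nat) \<Rightarrow> nat) set" where
  "coeff_box S N = PiE (S \<times> monomials S N) (\<lambda>_. {..<N})"

definition formal_box :: "aff set \<Rightarrow> nat \<Rightarrow> formal_aff set" where
  "formal_box S N = monomials S N \<times> coeff_box S N"

definition monomial :: "aff set \<Rightarrow> (aff \<Rightarrow> nat) \<Rightarrow> nat" where
  "monomial S e = (\<Prod>t\<in>S. fst t ^ e t)"

definition formal_eval :: "nat \<Rightarrow> aff set \<Rightarrow> nat \<Rightarrow> formal_aff \<Rightarrow> nat \<Rightarrow> nat" where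
  "formal_eval p S N u x =
     (monomial S (fst u) * x + (\<Sum>i\<in>S \<times> monomials S N. snd u i * (monomial S (snd i) * snd (fst i)))) mod p"

definition formal_step :: "aff \<Rightarrow> formal_aff \<Rightarrow> formal_aff" where
  "formal_step s u = (bump s (fst u), bump (s, fst u) (snd u))"

lemma finite_aff_grp: "finite (aff_grp p)"
  by (rule finite_subset[of _ "{..<p} \<times> {..<p}"]) (auto simp: aff_grp_def)

lemma finite_formal_box: "finite S \<Longrightarrow> finite (formal_box S N)"
  by (simp add: formal_box_def coeff_box_def monomials_def finite_PiE)

lemma formal_eval_step:
  assumes "finite S" "s \<in> S" "fst u \<in> monomials S N"
  shows "formal_eval p S N (formal_step s u) x = formal_eval p S N u (aff_act p s x)"
proof -
  let ?B = "\<Sum>i\<in>S \<times> monomials S N. snd u i * (monomial S (snd i) * snd (fst i))"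
  have "formal_eval p S N (formal_step s u) x = (monomial S (fst u) * fst s * x + (?B + monomial S (fst u) * snd s)) mod p"
    unfolding formal_eval_def formal_step_def monomial_def
    using assms by (simp add: prod_power_bump sum_bump finite_PiE monomials_def)
  also have "\<dots> = (monomial S (fst u) * (fst s * x + snd s) + ?B) mod p"
    by (simp add: algebra_simps)
  also have "\<dots> = (monomial S (fst u) * ((fst s * x + snd s) mod p) + ?B) mod p"
    using mod_add_cong[OF mod_mult_right_eq[symmetric] refl] by blast
  finally show ?thesis unfolding formal_eval_def aff_act_def .
qed

lemma not_prime_dvd_monomial:
  assumes "prime p" "S \<subseteq> aff_grp p"
  shows "\<not> p dvd monomial S e"
proof
  assume "p dvd monomial S e"
  then have "\<exists>t\<in>S. p dvd fst t ^ e t"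
    unfolding monomial_def
    by (simp add: prime_dvd_prod_iff[OF finite_subset[OF assms(2) finite_aff_grp] assms(1)])
  then obtain t where "t \<in> S" and dvd_power: "p dvd fst t ^ e t" by blast
  from dvd_power have "p dvd fst t" by (rule prime_dvd_power[OF assms(1)])
  moreover have "0 < fst t" "fst t < p"
    using \<open>t \<in> S\<close> assms(2) by (auto simp: aff_grp_def)
  ultimately show False
    using nat_dvd_not_less by blast
qed

lemma inj_formal_step: "inj (formal_step s)"
proof (rule injI)
  fix u v assume eq: "formal_step s u = formal_step s v"
  then have "fst u = fst v" by (simp add: formal_step_def inj_eq[OF inj_bump])
  with eq have "snd u = snd v" by (simp add: formal_step_def inj_eq[OF inj_bump])
  with \<open>fst u = fst v\<close> show "u = v" by (simp add: prod_eq_iff)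
qed

lemma formal_step_out_subset:
  assumes "s \<in> S"
  shows "formal_step s ` formal_box S N - formal_box S N
           \<subseteq> formal_step s ` ({u \<in> formal_box S N. fst u s = N - 1} \<union>
                              {u \<in> formal_box S N. snd u (s, fst u) = N - 1})"
proof
  fix v assume "v \<in> formal_step s ` formal_box S N - formal_box S N"
  then obtain u where u: "u \<in> formal_box S N" "v = formal_step s u" "formal_step s u \<notin> formal_box S N"
    by blast
  have e: "fst u \<in> monomials S N" and c: "snd u \<in> coeff_box S N"
    using u(1) by (auto simp: formal_box_def)
  with assms have index: "(s, fst u) \<in> S \<times> monomials S N" by simp
  have "fst u s = N - 1 \<or> snd u (s, fst u) = N - 1"
  proof (rule ccontr)
    assume "\<not> (fst u s = N - 1 \<or> snd u (s, fst u) = N - 1)"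
    with assms e c index have "bump s (fst u) \<in> monomials S N" "bump (s, fst u) (snd u) \<in> coeff_box S N"
      unfolding monomials_def coeff_box_def by (simp_all add: bump_in_box)
    with u(3) show False by (simp add: formal_step_def formal_box_def)
  qed
  with u(1,2) show "v \<in> formal_step s ` ({u \<in> formal_box S N. fst u s = N - 1} \<union>
                              {u \<in> formal_box S N. snd u (s, fst u) = N - 1})"
    by blast
qed

lemma card_top_exponent:
  fixes N :: nat
  assumes "finite S" "s \<in> S" "N \<ge> 1"
  shows "N * card {u \<in> formal_box S N. fst u s = N - 1} = card (formal_box S N)"
proof -
  have "{u \<in> formal_box S N. fst u s = N - 1} = {e \<in> monomials S N. e s = N - 1} \<times> coeff_box S N"
    by (auto simp: formal_box_def)
  then show ?thesis
    using card_box_slice[OF assms(1,2), of "N - 1" N] assms(3)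
    by (simp add: formal_box_def monomials_def card_cartesian_product)
qed

lemma card_top_coefficient:
  fixes N :: nat
  assumes "finite S" "s \<in> S" "N \<ge> 1"
  shows "N * card {u \<in> formal_box S N. snd u (s, fst u) = N - 1} = card (formal_box S N)"
proof -
  have "{u \<in> formal_box S N. snd u (s, fst u) = N - 1}
          = Sigma (monomials S N) (\<lambda>e. {c \<in> coeff_box S N. c (s, e) = N - 1})"
    by (auto simp: formal_box_def)
  then have "N * card {u \<in> formal_box S N. snd u (s, fst u) = N - 1}
               = (\<Sum>e\<in>monomials S N. N * card {c \<in> coeff_box S N. c (s, e) = N - 1})"
    using assms(1) by (simp add: card_SigmaI sum_distrib_left monomials_def coeff_box_def finite_PiE)
  also have "\<dots> = (\<Sum>e\<in>monomials S N. card (coeff_box S N))"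
    unfolding coeff_box_def
    by (intro sum.cong refl card_box_slice) (use assms in \<open>auto simp: monomials_def finite_PiE\<close>)
  finally show ?thesis by (simp add: formal_box_def card_cartesian_product)
qed

lemma card_formal_step_out:
  fixes N :: nat
  assumes "finite S" "s \<in> S" "N \<ge> 1"
  shows "N * card (formal_step s ` formal_box S N - formal_box S N) \<le> 2 * card (formal_box S N)"
proof -
  let ?top_e = "{u \<in> formal_box S N. fst u s = N - 1}"
    and ?top_c = "{u \<in> formal_box S N. snd u (s, fst u) = N - 1}"
  have finite_top: "finite (?top_e \<union> ?top_c)" using finite_formal_box[OF assms(1)] by simp
  then have "card (formal_step s ` formal_box S N - formal_box S N) \<le> card (formal_step s ` (?top_e \<union> ?top_c))"
    by (intro card_mono finite_imageI formal_step_out_subset[OF assms(2)])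
  also have "\<dots> \<le> card (?top_e \<union> ?top_c)"
    using finite_top by (rule card_image_le)
  also have "\<dots> \<le> card ?top_e + card ?top_c" by (rule card_Un_le)
  finally have "N * card (formal_step s ` formal_box S N - formal_box S N) \<le> N * card ?top_e + N * card ?top_c"
    by (simp add: add_mult_distrib2[symmetric])
  then show ?thesis
    using card_top_exponent[OF assms] card_top_coefficient[OF assms] by simp
qed

lemma card_formal_box_le:
  fixes N :: nat
  assumes "finite S" "card S \<le> k" "N \<ge> 1"
  shows "card (formal_box S N) \<le> N ^ k * N ^ (k * N ^ k)"
proof -
  have card_monomials: "card (monomials S N) \<le> N ^ k"
    using assms by (simp add: monomials_def card_PiE power_increasing)
  then have "card (S \<times> monomials S N) \<le> k * N ^ k"
    using assms(2) by (simp add: card_cartesian_product mult_le_mono)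
  then have "card (coeff_box S N) \<le> N ^ (k * N ^ k)"
    using assms by (simp add: coeff_box_def card_PiE monomials_def finite_PiE power_increasing)
  with card_monomials show ?thesis
    by (simp add: formal_box_def card_cartesian_product mult_le_mono)
qed

lemma aff_schreier_small_boundary:
  fixes N :: nat
  assumes "prime p" "S \<subseteq> aff_grp p" "N \<ge> 1"
  shows "\<exists>X \<subseteq> {..<p}. X \<noteq> {} \<and> card X \<le> card (formal_box S N) \<and>
           N * card (vertex_boundary {..<p} (schreier_adj (aff_act p) S) X) \<le> 2 * card S * card X"
proof -
  have "finite S" using assms(2) finite_aff_grp by (rule finite_subset)
  interpret equivariant_cover "{..<p}" "aff_act p" S "formal_box S N" formal_step "formal_eval p S N"
  proof
    show "finite (formal_box S N)" using \<open>finite S\<close> by (rule finite_formal_box)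
    show "aff_act p s x \<in> {..<p}" for s x
      using prime_gt_0_nat[OF assms(1)] by (simp add: aff_act_def)
    show "bij_betw (formal_eval p S N u) {..<p} {..<p}" for u
      unfolding formal_eval_def
      by (rule bij_betw_affine_mod[OF assms(1) not_prime_dvd_monomial[OF assms(1,2)]])
    show "inj_on (formal_step s) (formal_box S N)" for s
      using inj_formal_step by (rule inj_on_subset) simp
    show "formal_eval p S N (formal_step s u) x = formal_eval p S N u (aff_act p s x)"
      if "s \<in> S" "u \<in> formal_box S N" for s u x
      using formal_eval_step[OF \<open>finite S\<close> that(1)] that(2) by (auto simp: formal_box_def)
  qed (use \<open>finite S\<close> in auto)
  have "0 \<in> {..<p}" using prime_gt_0_nat[OF assms(1)] by simp
  moreover have "formal_box S N \<noteq> {}"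
    using assms(3) by (auto simp: formal_box_def coeff_box_def monomials_def PiE_eq_empty_iff lessThan_empty_iff)
  ultimately show ?thesis
    using exists_small_boundary card_formal_step_out[OF \<open>finite S\<close> _ assms(3)] by blast
qed

lemma aff_h_ver_le:
  fixes N :: nat
  assumes "prime p" "S \<subseteq> aff_grp p" "card S \<le> k" "N \<ge> 1"
    and large: "2 * (N ^ k * N ^ (k * N ^ k)) \<le> p"
  shows "h_ver {..<p} (schreier_adj (aff_act p) S) \<le> 2 * real k / real N"
proof -
  let ?boundary = "vertex_boundary {..<p} (schreier_adj (aff_act p) S)"
  have "finite S" using assms(2) finite_aff_grp by (rule finite_subset)
  obtain X where X: "X \<subseteq> {..<p}" "X \<noteq> {}" "card X \<le> card (formal_box S N)"
    and boundary: "N * card (?boundary X) \<le> 2 * card S * card X"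
    using aff_schreier_small_boundary[OF assms(1,2,4)] by blast
  have "card X > 0" using X(1,2) by (simp add: card_gt_0_iff finite_subset)
  have "2 * card X \<le> card {..<p}"
    using X(3) card_formal_box_le[OF \<open>finite S\<close> assms(3,4)] large by simp
  with X(1,2) have "h_ver {..<p} (schreier_adj (aff_act p) S) \<le> real (card (?boundary X)) / real (card X)"
    by (intro h_ver_le) auto
  also have "\<dots> \<le> 2 * real (card S) / real N"
  proof -
    have "real N * real (card (?boundary X)) \<le> 2 * real (card S) * real (card X)"
      using boundary by (metis of_nat_le_iff of_nat_mult of_nat_numeral)
    then show ?thesis
      using \<open>card X > 0\<close> assms(4) by (simp add: field_simps)
  qed
  also have "\<dots> \<le> 2 * real k / real N"
    using assms(3) by (simp add: divide_right_mono)
  finally show ?thesis .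
qed

theorem mainTheorem3:
  shows "\<not> aff_expanding"
proof
  assume "aff_expanding"
  then obtain k :: nat and \<epsilon> :: real and S where "\<epsilon> > 0" and
    expander: "\<And>p. prime p \<Longrightarrow> odd p \<Longrightarrow> S p \<subseteq> aff_grp p \<and> card (S p) \<le> k \<and>
                 h_ver {..<p} (schreier_adj (aff_act p) (S p)) \<ge> \<epsilon>"
    unfolding aff_expanding_def by blast
  define N where "N = nat \<lceil>2 * real k / \<epsilon>\<rceil> + 1"
  have "N \<ge> 1" by (simp add: N_def)
  have "2 * real k / \<epsilon> < real N"
    unfolding N_def by linarith
  then have "2 * real k / real N < \<epsilon>"
    using \<open>\<epsilon> > 0\<close> \<open>N \<ge> 1\<close> by (simp add: field_simps)
  obtain p :: nat where "prime p" "2 * (N ^ k * N ^ (k * N ^ k)) + 2 < p"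
    using bigger_prime by blast
  moreover from this have "odd p" using prime_odd_nat by auto
  ultimately have "h_ver {..<p} (schreier_adj (aff_act p) (S p)) \<le> 2 * real k / real N"
    using expander \<open>N \<ge> 1\<close> by (intro aff_h_ver_le) auto
  then show False
    using expander[OF \<open>prime p\<close> \<open>odd p\<close>] \<open>2 * real k / real N < \<epsilon>\<close> by simp
qed

end
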